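(* Let $m$ be a positive integer divisible by $3$, and for $z\in\{0,1\}$ let $\mathcal G_z$ be the uniform distribution over $\textsc{GapMaj}_m^{-1}(z)$. For every conjunction $C\colon\{0,1\}^m\to\{0,1\}$ of width $w\le m/7$ and each $z\in\{0,1\}$, $C(\mathcal G_z)\le 3^w\cdot C(\mathcal G_{1-z})$.
   Context: $\textsc{GapMaj}_m\colon\{0,1\}^m\to\{0,1\}$ is the partial function with value $0$ on inputs of Hamming weight $m/3$ and value $1$ on inputs of Hamming weight $2m/3$ (undefined otherwise). A conjunction is an AND of literals; its width is its number of literals. For a conjunction $C$ and distribution $\mathcal D$, $C(\mathcal D)=\Pr_{x\sim\mathcal D}[C(x)=1]$. *)

theory Defs
  imports "HOL-Probability.Probability"
begin

text \<open>Inputs in {0,1}^m are boolean lists of length m (True = 1).\<close>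

definition hweight :: "bool list \<Rightarrow> nat" where
  "hweight x = length (filter id x)"

definition gapmaj :: "nat \<Rightarrow> bool list \<Rightarrow> bool option" where
  "gapmaj m x =
     (if 3 * hweight x = m then Some False
      else if 3 * hweight x = 2 * m then Some True
      else None)"

definition G :: "nat \<Rightarrow> bool \<Rightarrow> bool list pmf" where
  "G m z = pmf_of_set {x. length x = m \<and> gapmaj m x = Some z}"

text \<open>A conjunction is a set of literals (i, b), meaning x_i = b;
  its width is the number of literals.\<close>
definition conj_eval :: "(nat \<times> bool) set \<Rightarrow> bool list \<Rightarrow> bool" where
  "conj_eval L x = (\<forall>(i, b) \<in> L. x ! i = b)"

definition width :: "(nat \<times> bool) set \<Rightarrow> nat" where
  "width L = card L"

definition acc :: "(nat \<times> bool) set \<Rightarrow> bool list pmf \<Rightarrow> real" where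
  "acc L D = measure_pmf.prob D {x. conj_eval L x}"

end

theory Submission
  imports Defs
begin

text \<open>Write m = 3k and let the conjunction fix a coordinates to 1 and b coordinates to 0,
  so w = a + b and n = m - w coordinates are free (a conjunction containing both literals
  of a variable accepts nothing). Counting the accepted inputs of each weight, the
  acceptance probability is C(n, k - a) / C(m, k) under G_0 and, after complementing,
  C(n, k - b) / C(m, k) under G_1. It remains to compare C(n, k - a) with C(n, k - b):
  in one direction the binomials increase towards n/2; in the other the ratio is a
  product of b - a factors, each at most 3 as long as w \<le> m/7.\<close>

lemma Suc_mult_choose_Suc: "Suc d * (n choose Suc d) = (n - d) * (n choose d)"
  using binomial_absorption[of d n] binomial_absorb_comp[of n d] by simp

lemma choose_le_pow_mult_choose:
  fixes c M P d :: nat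
  assumes "\<And>i. i < d \<Longrightarrow> M - i \<le> c * (P - i)"
  shows "M choose d \<le> c ^ d * (P choose d)"
  using assms
proof (induction d)
  case 0
  then show ?case by simp
next
  case (Suc d)
  have "Suc d * (M choose Suc d) = (M - d) * (M choose d)"
    by (rule Suc_mult_choose_Suc)
  also have "\<dots> \<le> (c * (P - d)) * (c ^ d * (P choose d))"
    using Suc by (intro mult_le_mono) simp_all
  also have "\<dots> = c ^ Suc d * ((P - d) * (P choose d))"
    by simp
  also have "\<dots> = Suc d * (c ^ Suc d * (P choose Suc d))"
    using Suc_mult_choose_Suc[of d P] by (metis mult.left_commute)
  finally show ?case
    by (simp only: mult_le_cancel1)
qed

text \<open>The subset-of-a-subset identity turns the ratio into C(n - j, d) / C(j + d, d), whose
  factors (n - j - i) / (j + d - i) are the ones bounded by c.\<close>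
lemma choose_add_le_pow_mult_choose:
  fixes c n j d :: nat
  assumes "j + d \<le> n" and "\<And>i. i < d \<Longrightarrow> n - j - i \<le> c * (j + d - i)"
  shows "n choose (j + d) \<le> c ^ d * (n choose j)"
proof -
  have "(n choose (j + d)) * ((j + d) choose d) = (n choose j) * ((n - j) choose d)"
    using choose_mult[of j "j + d" n] assms(1) binomial_symmetric[of j "j + d"] by simp
  also have "\<dots> \<le> (n choose j) * (c ^ d * ((j + d) choose d))"
    using choose_le_pow_mult_choose[of d "n - j" c "j + d"] assms(2) by simp
  finally show ?thesis
    by (simp add: ac_simps)
qed

lemma choose_ratio_le_three_pow:
  fixes a b k w :: nat
  assumes "a + b = w" and "7 * w \<le> 3 * k"
  shows "(3 * k - w) choose (k - a) \<le> 3 ^ w * ((3 * k - w) choose (k - b))"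
proof (cases "a \<le> b")
  case True
  have "(3 * k - w) choose ((k - b) + (b - a)) \<le> 3 ^ (b - a) * ((3 * k - w) choose (k - b))"
    by (rule choose_add_le_pow_mult_choose) (use assms True in auto)
  also have "\<dots> \<le> 3 ^ w * ((3 * k - w) choose (k - b))"
    using assms(1) by (intro mult_le_mono1 power_increasing) auto
  finally show ?thesis
    using assms True by simp
next
  case False
  have "(3 * k - w) choose (k - a) \<le> (3 * k - w) choose (k - b)"
    by (rule binomial_mono) (use assms False in auto)
  also have "\<dots> \<le> 3 ^ w * ((3 * k - w) choose (k - b))"
    by simp
  finally show ?thesis .
qed

lemma card_supersets_avoiding:
  assumes "finite A" and "P \<subseteq> A" and "P \<inter> N = {}" and "card P \<le> h"
  shows "card {T. T \<subseteq> A \<and> P \<subseteq> T \<and> T \<inter> N = {} \<and> card T = h}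
           = card (A - P - N) choose (h - card P)"
proof -
  have fin: "finite T" if "T \<subseteq> A" for T
    using assms(1) that by (rule rev_finite_subset)
  have card_Un: "card (U \<union> P) = card U + card P" if "U \<subseteq> A - P - N" for U
    using that assms(2) fin by (intro card_Un_disjoint) auto
  have "bij_betw (\<lambda>U. U \<union> P) {U. U \<subseteq> A - P - N \<and> card U = h - card P}
          {T. T \<subseteq> A \<and> P \<subseteq> T \<and> T \<inter> N = {} \<and> card T = h}"
  proof (rule bij_betw_byWitness[where f' = "\<lambda>T. T - P"])
    show "(\<lambda>U. U \<union> P) ` {U. U \<subseteq> A - P - N \<and> card U = h - card P}
            \<subseteq> {T. T \<subseteq> A \<and> P \<subseteq> T \<and> T \<inter> N = {} \<and> card T = h}"
      using assms by (auto simp: card_Un)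
    show "(\<lambda>T. T - P) ` {T. T \<subseteq> A \<and> P \<subseteq> T \<and> T \<inter> N = {} \<and> card T = h}
            \<subseteq> {U. U \<subseteq> A - P - N \<and> card U = h - card P}"
      using fin by (auto simp: card_Diff_subset)
  qed auto
  then show ?thesis
    using n_subsets[of "A - P - N" "h - card P"] assms(1) by (simp add: bij_betw_same_card)
qed

definition lits :: "bool \<Rightarrow> (nat \<times> bool) set \<Rightarrow> nat set" where
  "lits b L = {i. (i, b) \<in> L}"

lemma card_eq_card_lits:
  assumes "finite L"
  shows "card L = card (lits True L) + card (lits False L)"
proof -
  have L: "L = (\<lambda>i. (i, True)) ` lits True L \<union> (\<lambda>i. (i, False)) ` lits False L"
    by (auto simp: lits_def image_iff; metis (full_types))
  have "finite (lits b L)" for b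
    using finite_imageI[OF assms, of fst] by (rule rev_finite_subset) (force simp: lits_def)
  then show ?thesis
    by (subst L, subst card_Un_disjoint) (auto simp: card_image inj_on_def)
qed

lemma acc_contradictory:
  assumes "(i, True) \<in> L" and "(i, False) \<in> L"
  shows "acc L D = 0"
proof -
  have "\<not> conj_eval L x" for x
  proof
    assume "conj_eval L x"
    then have "\<forall>p \<in> L. x ! fst p = snd p"
      unfolding conj_eval_def split_beta .
    then show False
      using assms by (metis fst_conv snd_conv)
  qed
  then have "{x. conj_eval L x} = {}"
    by simp
  then show ?thesis
    by (simp add: acc_def)
qed

definition list_of_set :: "nat \<Rightarrow> nat set \<Rightarrow> bool list" where
  "list_of_set m T = map (\<lambda>i. i \<in> T) [0..<m]"

lemma nth_list_of_set [simp]: "i < m \<Longrightarrow> list_of_set m T ! i = (i \<in> T)"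
  by (simp add: list_of_set_def)

lemma bij_betw_list_of_set: "bij_betw (list_of_set m) (Pow {0..<m}) {x. length x = m}"
  by (rule bij_betw_byWitness[where f' = "\<lambda>x. {i. i < length x \<and> x ! i}"])
     (auto simp: list_of_set_def intro: nth_equalityI)

lemma card_lists_eq_card_sets:
  "card {x. length x = m \<and> Q x} = card {T. T \<subseteq> {0..<m} \<and> Q (list_of_set m T)}"
proof -
  have "bij_betw (list_of_set m) {T \<in> Pow {0..<m}. Q (list_of_set m T)} {x \<in> {x. length x = m}. Q x}"
    by (rule bij_betw_Collect[OF bij_betw_list_of_set]) simp
  then show ?thesis
    by (simp add: bij_betw_same_card)
qed

lemma hweight_list_of_set: "T \<subseteq> {0..<m} \<Longrightarrow> hweight (list_of_set m T) = card T"
  unfolding hweight_def list_of_set_def length_filter_conv_card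
  by (auto intro!: arg_cong[where f = card])

lemma conj_eval_list_of_set:
  assumes "L \<subseteq> {0..<m} \<times> UNIV"
  shows "conj_eval L (list_of_set m T) \<longleftrightarrow> lits True L \<subseteq> T \<and> T \<inter> lits False L = {}"
proof -
  have "conj_eval L (list_of_set m T) \<longleftrightarrow> (\<forall>(i, b) \<in> L. (i \<in> T) = b)"
    unfolding conj_eval_def split_beta using assms by (intro ball_cong) auto
  also have "\<dots> \<longleftrightarrow> lits True L \<subseteq> T \<and> T \<inter> lits False L = {}"
    by (auto simp: lits_def)
  finally show ?thesis .
qed

definition slice :: "nat \<Rightarrow> nat \<Rightarrow> bool list set" where
  "slice m h = {x. length x = m \<and> hweight x = h}"

lemma card_slice: "card (slice m h) = m choose h"
proof -
  have "card (slice m h) = card {T. T \<subseteq> {0..<m} \<and> card T = h}"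
    unfolding slice_def card_lists_eq_card_sets
    by (intro arg_cong[where f = card]) (auto simp: hweight_list_of_set)
  then show ?thesis
    by (simp add: n_subsets)
qed

lemma card_slice_conj_eval:
  assumes "L \<subseteq> {0..<m} \<times> UNIV" and "lits True L \<inter> lits False L = {}"
    and "card (lits True L) \<le> h"
  shows "card (slice m h \<inter> {x. conj_eval L x}) = (m - card L) choose (h - card (lits True L))"
proof -
  have "finite L"
    using assms(1) by (rule finite_subset) simp
  have lits: "lits b L \<subseteq> {0..<m}" for b
    using assms(1) by (auto simp: lits_def)
  have "slice m h \<inter> {x. conj_eval L x} = {x. length x = m \<and> hweight x = h \<and> conj_eval L x}"
    by (auto simp: slice_def)
  then have "card (slice m h \<inter> {x. conj_eval L x})
      = card {T. T \<subseteq> {0..<m} \<and> lits True L \<subseteq> T \<and> T \<inter> lits False L = {} \<and> card T = h}"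
    by (simp only: card_lists_eq_card_sets)
       (auto intro!: arg_cong[where f = card] simp: hweight_list_of_set conj_eval_list_of_set[OF assms(1)])
  also have "\<dots> = card ({0..<m} - lits True L - lits False L) choose (h - card (lits True L))"
    using assms(2,3) lits by (intro card_supersets_avoiding) auto
  also have "{0..<m} - lits True L - lits False L = {0..<m} - (lits True L \<union> lits False L)"
    by blast
  also have "card \<dots> = m - card L"
    using card_Diff_subset[of "lits True L \<union> lits False L" "{0..<m}"]
      card_Un_disjoint[of "lits True L" "lits False L"] card_eq_card_lits[OF \<open>finite L\<close>]
      assms(2) lits finite_subset[OF lits] by simp
  finally show ?thesis .
qed

lemma acc_pmf_of_slice:
  assumes "L \<subseteq> {0..<m} \<times> UNIV" and "lits True L \<inter> lits False L = {}"
    and "card (lits True L) \<le> h" and "h \<le> m"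
  shows "acc L (pmf_of_set (slice m h))
           = real ((m - card L) choose (h - card (lits True L))) / real (m choose h)"
proof -
  have "finite (slice m h)"
    by (rule finite_subset[OF _ finite_lists_length_eq[of UNIV m]]) (auto simp: slice_def)
  moreover have "slice m h \<noteq> {}"
    using card_slice[of m h] assms(4) by fastforce
  ultimately show ?thesis
    unfolding acc_def by (simp add: measure_pmf_of_set card_slice card_slice_conj_eval[OF assms(1-3)])
qed

lemma G_eq_pmf_of_slice: "0 < k \<Longrightarrow> G (3 * k) z = pmf_of_set (slice (3 * k) (if z then 2 * k else k))"
  unfolding G_def gapmaj_def slice_def by (intro arg_cong[where f = pmf_of_set]) auto

text \<open>For z = True the slice has weight 2k, and C(n, 2k - a) = C(n, k - b) by complementation.\<close>
lemma acc_G: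
  assumes "0 < k" and "L \<subseteq> {0..<3 * k} \<times> UNIV" and "lits True L \<inter> lits False L = {}"
    and "card L \<le> k"
  shows "acc L (G (3 * k) z)
           = real ((3 * k - card L) choose (k - card (lits (\<not> z) L))) / real ((3 * k) choose k)"
proof -
  have "finite L"
    using assms(2) by (rule finite_subset) simp
  then have lits_le: "card (lits b L) \<le> k" for b
    using card_eq_card_lits[of L] assms(4) by (cases b) auto
  show ?thesis
  proof (cases z)
    case True
    have "(3 * k - card L) choose (2 * k - card (lits True L))
        = (3 * k - card L) choose (k - card (lits False L))"
      using binomial_symmetric[of "2 * k - card (lits True L)" "3 * k - card L"]
        card_eq_card_lits[OF \<open>finite L\<close>] assms(4) by simp
    moreover have "(3 * k) choose (2 * k) = (3 * k) choose k"
      using binomial_symmetric[of k "3 * k"] by simp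
    ultimately show ?thesis
      using True assms lits_le[of True]
      by (simp add: G_eq_pmf_of_slice acc_pmf_of_slice)
  next
    case False
    then show ?thesis
      using assms lits_le[of True] by (simp add: G_eq_pmf_of_slice acc_pmf_of_slice)
  qed
qed

theorem fact2p2:
  fixes m :: nat and L :: "(nat \<times> bool) set" and z :: bool
  assumes "m > 0" and "3 dvd m"
    and "L \<subseteq> {0..<m} \<times> UNIV"
    and "real (width L) \<le> real m / 7"
  shows "acc L (G m z) \<le> 3 ^ width L * acc L (G m (\<not> z))"
proof (cases "lits True L \<inter> lits False L = {}")
  case False
  then obtain i where "(i, True) \<in> L" "(i, False) \<in> L"
    by (auto simp: lits_def)
  then show ?thesis
    by (simp add: acc_contradictory)
next
  case True
  obtain k where m: "m = 3 * k"
    using assms(2) by blast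
  have w: "7 * card L \<le> 3 * k"
    using assms(4) m by (simp add: width_def)
  have acc_eq: "acc L (G m b)
      = real ((3 * k - card L) choose (k - card (lits (\<not> b) L))) / real ((3 * k) choose k)" for b
    unfolding m using assms(1,3) True w m by (intro acc_G) auto
  have "finite L"
    using assms(3) by (rule finite_subset) simp
  then have "card (lits (\<not> z) L) + card (lits z L) = card L"
    using card_eq_card_lits by (cases z) simp_all
  then have choose_le: "(3 * k - card L) choose (k - card (lits (\<not> z) L))
      \<le> 3 ^ card L * ((3 * k - card L) choose (k - card (lits z L)))"
    using w by (rule choose_ratio_le_three_pow)
  have "real ((3 * k - card L) choose (k - card (lits (\<not> z) L))) / real ((3 * k) choose k)
      \<le> real (3 ^ card L * ((3 * k - card L) choose (k - card (lits z L)))) / real ((3 * k) choose k)"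
    using choose_le by (intro divide_right_mono of_nat_mono) simp_all
  then show ?thesis
    unfolding acc_eq width_def by simp
qed

end
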